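(* Let $f_1,f_2$ be odd entire functions with $f_1'(0)\neq0$ and $f_2'(0)\neq0$, each satisfying $$(f'(0))^3 f(2z)=f(z)^4\,(\ln f(z))''' \quad\text{for all } z$$ (where $(\ln f)'''=(f'/f)''$). If $f_2-f_1$ vanishes to order at least $9$ at $z=0$, then $f_2=f_1$ identically.
   Context: Vanishing to order at least $9$ at $0$ means the Taylor coefficients of degrees $0,\dots,8$ at $0$ are zero (the paper writes $f_2\equiv f_1\bmod\mathcal{M}^9$, $\mathcal{M}$ the ideal of entire functions vanishing at $0$). *)

theory Defs
  imports "HOL-Complex_Analysis.Complex_Analysis"
begin

text \<open>The functional equation (f'(0))^3 f(2z) = f(z)^4 (ln f)'''(z), with
  (ln f)''' = (f'/f)''. The right-hand side is literally defined where f z \<noteq> 0.\<close>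
definition lemma5_eq :: "(complex \<Rightarrow> complex) \<Rightarrow> bool" where
  "lemma5_eq f \<longleftrightarrow> (\<forall>z. f z \<noteq> 0 \<longrightarrow>
     (deriv f 0) ^ 3 * f (2 * z) = f z ^ 4 * deriv (deriv (\<lambda>w. deriv f w / f w)) z)"

end

theory Submission imports Defs begin

text \<open>Both power series expansions at 0 satisfy the coefficient form
  a^3 F(2X) = F^3 F''' - 3 F^2 F' F'' + 2 F F'^3 (with a = F'(0)) of the functional equation.
  Suppose they first differ in degree m >= 9. As F = aX + O(X^3) by oddness, the coefficient
  of X^m on the right sees the difference D only through the linearisation
  a^3 (X^3 D''' - 3 X^2 D'' + 6 X D' + 2 D), so comparing coefficients gives
  2^m = (m-1)(m-2)(m-3) + 8. This holds for m = 3, 5, 7 but fails for every m >= 9, which is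
  why agreement to order 9 is needed.\<close>

definition log_deriv3_numerator :: "'a::comm_ring_1 \<Rightarrow> 'a \<Rightarrow> 'a \<Rightarrow> 'a \<Rightarrow> 'a" where
  "log_deriv3_numerator f f' f'' f''' = f ^ 3 * f''' - 3 * f ^ 2 * f' * f'' + 2 * f * f' ^ 3"

definition fps_log_deriv3_numerator :: "'a::comm_ring_1 fps \<Rightarrow> 'a fps" where
  "fps_log_deriv3_numerator F =
     log_deriv3_numerator F (fps_deriv F) (fps_deriv (fps_deriv F))
       (fps_deriv (fps_deriv (fps_deriv F)))"

text \<open>Read x as X and y as X^(m-3): the arguments are then the 3-jets of F and F + D for
  F, F'' vanishing at 0 and D of order m.\<close>
lemma log_deriv3_numerator_perturb:
  fixes x y H B K E G G1 G2 G3 :: "'a::comm_ring_1"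
  shows "x ^ 4 * y dvd
    log_deriv3_numerator (x * H + x ^ 3 * y * G) (B + x ^ 2 * y * G1) (x * K + x * y * G2) (E + y * G3)
    - log_deriv3_numerator (x * H) B (x * K) E
    - x ^ 3 * y * (H ^ 3 * G3 - 3 * H ^ 2 * B * G2 + 6 * H * B ^ 2 * G1 + 2 * B ^ 3 * G)"
proof
  show "log_deriv3_numerator (x * H + x ^ 3 * y * G) (B + x ^ 2 * y * G1) (x * K + x * y * G2) (E + y * G3)
    - log_deriv3_numerator (x * H) B (x * K) E
    - x ^ 3 * y * (H ^ 3 * G3 - 3 * H ^ 2 * B * G2 + 6 * H * B ^ 2 * G1 + 2 * B ^ 3 * G)
    = x ^ 4 * y * (x * (
        (3 * H ^ 2 * E * G - 3 * H ^ 2 * K * G1 - 6 * H * B * K * G)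
      + x ^ 2 * y * (3 * H * E * G ^ 2 - 3 * B * K * G ^ 2 - 6 * H * K * G * G1)
      + y * (6 * B ^ 2 * G * G1 + 6 * H * B * G1 ^ 2 - 6 * H * B * G * G2 - 3 * H ^ 2 * G1 * G2
          + 3 * H ^ 2 * G * G3)
      + x ^ 2 * y ^ 2 * (6 * B * G * G1 ^ 2 - 3 * B * G ^ 2 * G2 + 2 * H * G1 ^ 3
          - 6 * H * G * G1 * G2 + 3 * H * G ^ 2 * G3)
      + x ^ 4 * y ^ 2 * (E * G ^ 3 - 3 * K * G ^ 2 * G1)
      + x ^ 4 * y ^ 3 * (2 * G * G1 ^ 3 - 3 * G ^ 2 * G1 * G2 + G ^ 3 * G3)))"
    unfolding log_deriv3_numerator_def
    by (simp add: algebra_simps power2_eq_square power3_eq_cube power4_eq_xxxx)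
qed

lemma fps_X_power_mult_fps_shift:
  assumes "\<And>k. k < n \<Longrightarrow> fps_nth f k = 0"
  shows "fps_X ^ n * fps_shift n f = f"
  using assms by (auto simp: fps_eq_iff fps_X_power_mult_nth)

lemma fps_log_deriv3_numerator_perturb_nth:
  fixes F D :: "'a::comm_ring_1 fps"
  assumes F_0: "fps_nth F 0 = 0" and F_2: "fps_nth F 2 = 0"
    and m: "3 \<le> m" and D_low: "\<And>k. k < m \<Longrightarrow> fps_nth D k = 0"
  shows "fps_nth (fps_log_deriv3_numerator (F + D) - fps_log_deriv3_numerator F) m
     = fps_nth F 1 ^ 3 * of_nat ((m - 1) * (m - 2) * (m - 3) + 8) * fps_nth D m"
proof -
  obtain k where k: "m = k + 3" using m by (metis add.commute le_iff_add)
  define x y where "x = (fps_X :: 'a fps)" and "y = (fps_X :: 'a fps) ^ k"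
  define H K where "H = fps_shift 1 F" and "K = fps_shift 1 (fps_deriv (fps_deriv F))"
  define G G1 G2 G3 where "G = fps_shift m D" and "G1 = fps_shift (m - 1) (fps_deriv D)"
    and "G2 = fps_shift (m - 2) (fps_deriv (fps_deriv D))"
    and "G3 = fps_shift (m - 3) (fps_deriv (fps_deriv (fps_deriv D)))"
  define B E where "B = fps_deriv F" and "E = fps_deriv (fps_deriv (fps_deriv F))"
  have X_powers: "x ^ 3 * y = fps_X ^ m" "x ^ 2 * y = fps_X ^ (m - 1)" "x * y = fps_X ^ (m - 2)"
    "y = fps_X ^ (m - 3)" "x ^ 4 * y = fps_X ^ Suc m"
    by (simp_all add: x_def y_def k power_add[symmetric])
  have F_eq: "x * H = F" unfolding x_def H_def
    using fps_X_power_mult_fps_shift[of 1 F] F_0 by simp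
  have d2F_eq: "x * K = fps_deriv (fps_deriv F)" unfolding x_def K_def
    using fps_X_power_mult_fps_shift[of 1 "fps_deriv (fps_deriv F)"] F_2
    by (simp add: numeral_2_eq_2)
  have D_eq: "x ^ 3 * y * G = D" unfolding X_powers(1) G_def
    by (rule fps_X_power_mult_fps_shift) (rule D_low)
  have dD_eq: "x ^ 2 * y * G1 = fps_deriv D" unfolding X_powers(2) G1_def
    by (rule fps_X_power_mult_fps_shift) (simp add: D_low k)
  have d2D_eq: "x * y * G2 = fps_deriv (fps_deriv D)" unfolding X_powers(3) G2_def
    by (rule fps_X_power_mult_fps_shift) (simp add: D_low k)
  have d3D_eq: "y * G3 = fps_deriv (fps_deriv (fps_deriv D))" unfolding X_powers(4) G3_def
    by (rule fps_X_power_mult_fps_shift) (simp add: D_low k)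
  have "fps_log_deriv3_numerator (F + D) = log_deriv3_numerator
      (x * H + x ^ 3 * y * G) (B + x ^ 2 * y * G1) (x * K + x * y * G2) (E + y * G3)"
    "fps_log_deriv3_numerator F = log_deriv3_numerator (x * H) B (x * K) E"
    by (simp_all only: fps_log_deriv3_numerator_def fps_deriv_add B_def E_def
        F_eq d2F_eq D_eq dD_eq d2D_eq d3D_eq)
  moreover obtain R where "log_deriv3_numerator
      (x * H + x ^ 3 * y * G) (B + x ^ 2 * y * G1) (x * K + x * y * G2) (E + y * G3)
    - log_deriv3_numerator (x * H) B (x * K) E
    - x ^ 3 * y * (H ^ 3 * G3 - 3 * H ^ 2 * B * G2 + 6 * H * B ^ 2 * G1 + 2 * B ^ 3 * G)
    = x ^ 4 * y * R"
    using log_deriv3_numerator_perturb by (rule dvdE)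
  ultimately have R: "fps_log_deriv3_numerator (F + D) - fps_log_deriv3_numerator F
      = x ^ 3 * y * (H ^ 3 * G3 - 3 * H ^ 2 * B * G2 + 6 * H * B ^ 2 * G1 + 2 * B ^ 3 * G)
        + x ^ 4 * y * R"
    by (simp add: algebra_simps)
  have "fps_nth (fps_log_deriv3_numerator (F + D) - fps_log_deriv3_numerator F) m
      = fps_nth (H ^ 3 * G3 - 3 * H ^ 2 * B * G2 + 6 * H * B ^ 2 * G1 + 2 * B ^ 3 * G) 0"
    unfolding R X_powers(1,5) by (simp add: fps_X_power_mult_nth del: power_Suc)
  also have "\<dots> = fps_nth F 1 ^ 3 * (of_nat (m * (m - 1) * (m - 2)) - 3 * of_nat (m * (m - 1))
      + 6 * of_nat m + 2) * fps_nth D m"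
    by (simp add: H_def B_def G_def G1_def G2_def G3_def k fps_power_zeroth numeral_3_eq_3
        power2_eq_square power3_eq_cube algebra_simps)
  also have "of_nat (m * (m - 1) * (m - 2)) - 3 * of_nat (m * (m - 1)) + 6 * of_nat m + 2
      = (of_nat ((m - 1) * (m - 2) * (m - 3) + 8) :: 'a)"
    by (simp add: k algebra_simps)
  finally show ?thesis .
qed

lemma cubic_plus_8_less_power2:
  assumes "9 \<le> m"
  shows "(m - 1) * (m - 2) * (m - 3) + 8 < (2::nat) ^ m"
  using assms
proof (induction m rule: nat_induct_at_least)
  case base
  show ?case by simp
next
  case (Suc m)
  have "m \<le> 2 * (m - 3)" using Suc.hyps by simp
  then have "m * (m - 1) * (m - 2) \<le> 2 * ((m - 1) * (m - 2) * (m - 3))"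
    by (metis mult.commute mult.left_commute mult_le_mono1)
  also have "\<dots> < 2 * (2 ^ m - 8)" using Suc.IH by simp
  finally show ?case by simp
qed

lemma fps_log_deriv3_numerator_eq_unique:
  fixes F1 F2 :: "'a::{idom, ring_char_0} fps"
  assumes F1_0: "fps_nth F1 0 = 0" and F1_2: "fps_nth F1 2 = 0" and F1_1: "fps_nth F1 1 \<noteq> 0"
    and eq1: "fps_const (fps_nth F1 1 ^ 3) * (F1 oo (fps_const 2 * fps_X))
                = fps_log_deriv3_numerator F1"
    and eq2: "fps_const (fps_nth F2 1 ^ 3) * (F2 oo (fps_const 2 * fps_X))
                = fps_log_deriv3_numerator F2"
    and agree: "\<And>k. k \<le> 8 \<Longrightarrow> fps_nth F2 k = fps_nth F1 k"
  shows "F2 = F1"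
proof (rule ccontr)
  assume "F2 \<noteq> F1"
  define D where "D = F2 - F1"
  define m where "m = subdegree D"
  define a where "a = fps_nth F1 1"
  have "D \<noteq> 0" using \<open>F2 \<noteq> F1\<close> by (simp add: D_def)
  then have D_m: "fps_nth D m \<noteq> 0" by (simp add: m_def)
  have "9 \<le> m"
    using D_m agree[of m] by (cases "m \<le> 8") (auto simp: D_def)
  have D_low: "fps_nth D k = 0" if "k < m" for k
    using that by (simp add: m_def nth_less_subdegree_zero)
  have "fps_nth F2 1 = a" using agree[of 1] by (simp add: a_def)
  then have "fps_nth (fps_log_deriv3_numerator F2) m = a ^ 3 * 2 ^ m * fps_nth F2 m"
    unfolding eq2[symmetric] by simp
  moreover have "fps_nth (fps_log_deriv3_numerator F1) m = a ^ 3 * 2 ^ m * fps_nth F1 m"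
    unfolding eq1[symmetric] by (simp add: a_def)
  ultimately have "a ^ 3 * 2 ^ m * fps_nth D m
      = fps_nth (fps_log_deriv3_numerator (F1 + D) - fps_log_deriv3_numerator F1) m"
    by (simp add: D_def algebra_simps)
  also have "\<dots> = a ^ 3 * of_nat ((m - 1) * (m - 2) * (m - 3) + 8) * fps_nth D m"
    using fps_log_deriv3_numerator_perturb_nth[OF F1_0 F1_2 _ D_low] \<open>9 \<le> m\<close>
    by (simp add: a_def)
  finally have "of_nat (2 ^ m) = (of_nat ((m - 1) * (m - 2) * (m - 3) + 8) :: 'a)"
    using F1_1 D_m by (simp add: a_def)
  then show False
    using cubic_plus_8_less_power2[OF \<open>9 \<le> m\<close>] by (simp only: of_nat_eq_iff)
qed

lemma power4_mult_deriv2_log_deriv: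
  fixes f :: "complex \<Rightarrow> complex"
  assumes hol: "f holomorphic_on S" and S: "open S" "z \<in> S" and nz: "f z \<noteq> 0"
  shows "f z ^ 4 * deriv (deriv (\<lambda>w. deriv f w / f w)) z =
    log_deriv3_numerator (f z) (deriv f z) (deriv (deriv f) z) (deriv (deriv (deriv f)) z)"
proof -
  define f1 f2 f3 where "f1 = deriv f" and "f2 = deriv f1" and "f3 = deriv f2"
  have hol1: "f1 holomorphic_on S" and hol2: "f2 holomorphic_on S"
    using hol S(1) by (simp_all add: f1_def f2_def holomorphic_deriv)
  have f: "(f has_field_derivative f1 w) (at w)"
    and f1: "(f1 has_field_derivative f2 w) (at w)"
    and f2: "(f2 has_field_derivative f3 w) (at w)" if "w \<in> S" for w
    using that hol hol1 hol2 S(1) by (simp_all add: f1_def f2_def f3_def holomorphic_derivI)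
  have "isCont f z"
    using holomorphic_on_imp_continuous_on[OF hol] S continuous_on_eq_continuous_at by blast
  then have "\<forall>\<^sub>F w in at z. f w \<noteq> 0"
    using nz by (simp add: isCont_def tendsto_imp_eventually_ne)
  then have "\<forall>\<^sub>F w in nhds z. w \<in> S \<and> f w \<noteq> 0"
    using S nz by (simp add: eventually_nhds_conv_at eventually_conj eventually_at_in_open')
  then have "\<forall>\<^sub>F w in nhds z. deriv (\<lambda>w. f1 w / f w) w = (f2 w * f w - f1 w * f1 w) / (f w * f w)"
    by eventually_elim (auto intro!: DERIV_imp_deriv DERIV_divide f f1)
  then have "deriv (deriv (\<lambda>w. f1 w / f w)) z
      = deriv (\<lambda>w. (f2 w * f w - f1 w * f1 w) / (f w * f w)) z"
    by (rule deriv_cong_ev) simp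
  also have "\<dots> = ((f3 z * f z + f2 z * f1 z - (f2 z * f1 z + f1 z * f2 z)) * (f z * f z)
      - (f2 z * f z - f1 z * f1 z) * (f1 z * f z + f z * f1 z)) / (f z * f z * (f z * f z))"
    using S(2) nz
    by (intro DERIV_imp_deriv DERIV_divide) (auto intro!: derivative_eq_intros f f1 f2)
  finally show ?thesis
    using nz by (simp add: log_deriv3_numerator_def f1_def f2_def f3_def field_simps
      power2_eq_square power3_eq_cube power4_eq_xxxx)
qed

lemma fps_nth_even_eq_0_if_odd:
  fixes f :: "complex \<Rightarrow> complex"
  assumes F: "f has_fps_expansion F" and odd: "\<And>z. f (- z) = - f z" and "even n"
  shows "fps_nth F n = 0"
proof -
  have "(f \<circ> uminus) has_fps_expansion (F oo - fps_X)"
    using F by (intro has_fps_expansion_compose fps_expansion_intros) auto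
  moreover have "f \<circ> uminus = (\<lambda>z. - f z)" using odd by auto
  ultimately have "(\<lambda>z. - f z) has_fps_expansion Abs_fps (\<lambda>n. (- 1) ^ n * fps_nth F n)"
    by (simp add: fps_compose_uminus')
  moreover have "(\<lambda>z. - f z) has_fps_expansion - F"
    using F by (rule has_fps_expansion_minus)
  ultimately have "Abs_fps (\<lambda>n. (- 1) ^ n * fps_nth F n) = - F"
    by (rule fps_expansion_unique_complex)
  then have "fps_nth F n = - fps_nth F n"
    using \<open>even n\<close> by (metis fps_nth_Abs_fps fps_neg_nth mult_1 neg_one_even_power)
  then show ?thesis by simp
qed

lemma has_fps_expansion_log_deriv3_numerator:
  fixes f :: "complex \<Rightarrow> complex"
  assumes F: "f has_fps_expansion F"
  shows "(\<lambda>z. log_deriv3_numerator (f z) (deriv f z) (deriv (deriv f) z) (deriv (deriv (deriv f)) z))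
    has_fps_expansion fps_log_deriv3_numerator F"
proof -
  have "deriv f has_fps_expansion fps_deriv F"
    "deriv (deriv f) has_fps_expansion fps_deriv (fps_deriv F)"
    "deriv (deriv (deriv f)) has_fps_expansion fps_deriv (fps_deriv (fps_deriv F))"
    using F by (auto intro!: has_fps_expansion_deriv)
  then show ?thesis
    using F unfolding log_deriv3_numerator_def fps_log_deriv3_numerator_def
    by (intro fps_expansion_intros)
qed

lemma lemma5_eq_imp_fps_eq:
  fixes f :: "complex \<Rightarrow> complex"
  assumes hol: "f holomorphic_on UNIV" and F: "f has_fps_expansion F"
    and f0: "f 0 = 0" and f'0: "deriv f 0 \<noteq> 0" and eq: "lemma5_eq f"
  shows "fps_const (fps_nth F 1 ^ 3) * (F oo (fps_const 2 * fps_X)) = fps_log_deriv3_numerator F"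
proof -
  have scale: "(\<lambda>z::complex. 2 * z) has_fps_expansion fps_const 2 * fps_X"
    by (intro fps_expansion_intros)
  have F1: "fps_nth F 1 = deriv f 0"
    using fps_nth_fps_expansion[OF F, of 1] by simp
  have "\<forall>\<^sub>F z in at 0. (f z - f 0) / (z - 0) \<noteq> 0"
    using holomorphic_derivI[OF hol open_UNIV UNIV_I, of 0] f'0
    by (intro tendsto_imp_eventually_ne) (auto simp: has_field_derivative_iff)
  then have "\<forall>\<^sub>F z in nhds 0. z \<noteq> 0 \<longrightarrow> f z \<noteq> 0"
    by (simp add: eventually_at_filter f0)
  then have "\<forall>\<^sub>F z in nhds 0. fps_nth F 1 ^ 3 * f (2 * z) =
      log_deriv3_numerator (f z) (deriv f z) (deriv (deriv f) z) (deriv (deriv (deriv f)) z)"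
  proof eventually_elim
    case (elim z)
    show ?case
    proof (cases "z = 0")
      case True
      then show ?thesis by (simp add: f0 log_deriv3_numerator_def)
    next
      case False
      then show ?thesis
        using elim eq[unfolded lemma5_eq_def]
          power4_mult_deriv2_log_deriv[OF hol open_UNIV UNIV_I, of z]
        unfolding F1 by simp
    qed
  qed
  note eq_near_0 = this
  have lhs: "(\<lambda>z. fps_nth F 1 ^ 3 * f (2 * z)) has_fps_expansion
      fps_const (fps_nth F 1 ^ 3) * (F oo (fps_const 2 * fps_X))"
    using has_fps_expansion_compose[OF F scale] by (intro fps_expansion_intros) (simp add: o_def)
  have "(\<lambda>z. fps_nth F 1 ^ 3 * f (2 * z)) has_fps_expansion fps_log_deriv3_numerator F"
    using has_fps_expansion_cong[OF eq_near_0 refl] has_fps_expansion_log_deriv3_numerator[OF F]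
    by simp
  with lhs show ?thesis
    by (rule fps_expansion_unique_complex)
qed

theorem lemma5:
  fixes f1 f2 :: "complex \<Rightarrow> complex"
  assumes "f1 holomorphic_on UNIV" and "f2 holomorphic_on UNIV"
    and "\<And>z. f1 (- z) = - f1 z" and "\<And>z. f2 (- z) = - f2 z"
    and "deriv f1 0 \<noteq> 0" and "deriv f2 0 \<noteq> 0"
    and "lemma5_eq f1" and "lemma5_eq f2"
    and "\<And>k. k \<le> 8 \<Longrightarrow> (deriv ^^ k) (\<lambda>z. f2 z - f1 z) 0 = 0"
  shows "f2 = f1"
proof -
  define F1 F2 where "F1 = fps_expansion f1 0" and "F2 = fps_expansion f2 0"
  have F1: "f1 has_fps_expansion F1" and F2: "f2 has_fps_expansion F2"
    unfolding F1_def F2_def using assms(1,2)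
    by (simp_all add: has_fps_expansion_fps_expansion[OF open_UNIV UNIV_I])
  have "f1 0 = 0" "f2 0 = 0" using assms(3)[of 0] assms(4)[of 0] by simp_all
  have D: "(\<lambda>z. f2 z - f1 z) has_fps_expansion F2 - F1"
    using F1 F2 by (rule has_fps_expansion_diff[rotated])
  have "F2 = F1"
  proof (rule fps_log_deriv3_numerator_eq_unique)
    show "fps_nth F1 0 = 0" "fps_nth F1 2 = 0"
      using fps_nth_even_eq_0_if_odd[OF F1 assms(3)] by simp_all
    show "fps_nth F1 1 \<noteq> 0" using fps_nth_fps_expansion[OF F1, of 1] assms(5) by simp
    show "fps_const (fps_nth F1 1 ^ 3) * (F1 oo (fps_const 2 * fps_X))
            = fps_log_deriv3_numerator F1"
      "fps_const (fps_nth F2 1 ^ 3) * (F2 oo (fps_const 2 * fps_X))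
            = fps_log_deriv3_numerator F2"
      using lemma5_eq_imp_fps_eq[OF assms(1) F1 \<open>f1 0 = 0\<close> assms(5,7)]
        lemma5_eq_imp_fps_eq[OF assms(2) F2 \<open>f2 0 = 0\<close> assms(6,8)] by simp_all
    show "fps_nth F2 k = fps_nth F1 k" if "k \<le> 8" for k
      using fps_nth_fps_expansion[OF D, of k] assms(9)[OF that] by simp
  qed
  then have "(\<lambda>z. f2 z - f1 z) has_fps_expansion 0" using D by simp
  then have "f2 z - f1 z = 0" for z
    by (rule has_fps_expansion_0_analytic_continuation[of _ UNIV])
       (auto intro!: holomorphic_on_diff assms(1,2))
  then show ?thesis by auto
qed

end
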